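(* Suppose the market satisfies the finite-utility condition and $u$ is a CRRA utility of the form given in the context. Then for every admissible investment-consumption strategy $(\gamma,\alpha)$, $$\limsup_{\epsilon\to0}\mathbb E\Big(\int_{T^*-\epsilon}^{T^*}u(\gamma_t)\,\mathrm dt\Big)\le0.$$
   Context: Financial market containing a riskless asset with rate $r$ (e.g. the Black--Scholes--Merton market with stock $\mathrm dS_t=S_t(\mu\,\mathrm dt+\sigma\,\mathrm dW_t)$). Time set $\mathcal T$ is either a discrete grid with counting measure or an interval with Lebesgue measure, written $\mathrm dt$. An investment-consumption strategy $(\gamma,\alpha)$ consists of a non-negative progressively measurable consumption process $\gamma$ withdrawn from a fund and investment proportions $\alpha$; it is admissible if the fund value stays nonnegative. $u$ is CRRA up to affine transformation: $u(x)=x^a+c$ if $0<a<1$, $u(x)=-x^a+c$ if $a<0$, for a constant $c$. Finite-utility condition: $\sup\mathbb E\big(u(F_T^{(0,\alpha)})\big)<\infty$, the supremum over admissible strategies with zero consumption, where $F_T$ is the fund value at the horizon $T$. $T^*=\inf\{t\in\mathcal T:\tau<t\text{ almost surely}\}$ is the (assumed finite) upper bound on longevity, $\tau$ an individual's death time. *)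

theory Defs
  imports "HOL-Probability.Probability"
begin

text \<open>CRRA utility up to affine transformation, extended-real valued so that
  \<open>u(0) = -\<infinity>\<close> when \<open>a < 0\<close>.\<close>
definition crra :: "real \<Rightarrow> real \<Rightarrow> real \<Rightarrow> ereal" where
  "crra a c x =
     (if 0 < a \<and> a < 1 then ereal (x powr a + c)
      else if a < 0 then (if 0 < x then ereal (- (x powr a) + c) else -\<infinity>)
      else undefined)"

definition eint :: "'x measure \<Rightarrow> ('x \<Rightarrow> ereal) \<Rightarrow> ereal" where
  "eint N f = enn2ereal (\<integral>\<^sup>+ x. e2ennreal (f x) \<partial>N)
            - enn2ereal (\<integral>\<^sup>+ x. e2ennreal (- f x) \<partial>N)"

definition longevity_set :: "'w measure \<Rightarrow> real \<Rightarrow> ('w \<Rightarrow> real) \<Rightarrow> real set" where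
  "longevity_set M T \<tau> = {t \<in> {0..T}. AE \<omega> in M. \<tau> \<omega> < t}"

definition longevity_bound :: "'w measure \<Rightarrow> real \<Rightarrow> ('w \<Rightarrow> real) \<Rightarrow> real" where
  "longevity_bound M T \<tau> = Inf (longevity_set M T \<tau>)"

text \<open>Abstract continuous-time market on \<open>[0,T]\<close> with riskless rate \<open>r\<close>.
  \<open>Adm\<close> is the set of admissible strategies \<open>(\<gamma>, \<alpha>)\<close>, \<open>F \<gamma> \<alpha> t \<omega>\<close> the fund value.
  Riskless asset: the consumption stream can instead be kept in the riskless asset,
  giving an admissible zero-consumption strategy with terminal value
  \<open>F_T + \<integral>_0^T e^{r(T-t)} \<gamma>_t dt\<close>.\<close>
definition market :: "'w measure \<Rightarrow> real \<Rightarrow> real \<Rightarrow> ((real \<Rightarrow> 'w \<Rightarrow> real) \<times> 'a) set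
     \<Rightarrow> ((real \<Rightarrow> 'w \<Rightarrow> real) \<Rightarrow> 'a \<Rightarrow> real \<Rightarrow> 'w \<Rightarrow> real) \<Rightarrow> bool" where
  "market M T r Adm F \<longleftrightarrow>
     (\<forall>(\<gamma>, \<alpha>) \<in> Adm.
        (\<forall>t. \<forall>\<omega> \<in> space M. 0 \<le> \<gamma> t \<omega>)
      \<and> (\<lambda>(t, \<omega>). \<gamma> t \<omega>) \<in> borel_measurable (lborel \<Otimes>\<^sub>M M)
      \<and> (\<forall>t \<in> {0..T}. \<forall>\<omega> \<in> space M. 0 \<le> F \<gamma> \<alpha> t \<omega>)
      \<and> F \<gamma> \<alpha> T \<in> borel_measurable M)
   \<and> (\<forall>(\<gamma>, \<alpha>) \<in> Adm. \<exists>\<alpha>'. ((\<lambda>_ _. 0), \<alpha>') \<in> Adm \<and>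
        (AE \<omega> in M. ennreal (F (\<lambda>_ _. 0) \<alpha>' T \<omega>)
            = ennreal (F \<gamma> \<alpha> T \<omega>)
              + (\<integral>\<^sup>+ t \<in> {0..T}. ennreal (exp (r * (T - t)) * \<gamma> t \<omega>) \<partial>lborel)))"

definition finite_utility :: "'w measure \<Rightarrow> real \<Rightarrow> ((real \<Rightarrow> 'w \<Rightarrow> real) \<times> 'a) set
     \<Rightarrow> ((real \<Rightarrow> 'w \<Rightarrow> real) \<Rightarrow> 'a \<Rightarrow> real \<Rightarrow> 'w \<Rightarrow> real) \<Rightarrow> (real \<Rightarrow> ereal) \<Rightarrow> bool" where
  "finite_utility M T Adm F u \<longleftrightarrow>
     (SUP \<alpha> \<in> {\<alpha>. ((\<lambda>_ _. 0), \<alpha>) \<in> Adm}. eint M (\<lambda>\<omega>. u (F (\<lambda>_ _. 0) \<alpha> T \<omega>))) < \<infinity>"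

end

theory Submission
  imports Defs
begin

text \<open>Only the positive part of the utility matters for an upper bound. For \<open>a < 0\<close> the
  utility is at most \<open>c\<close>, so a window of length \<open>\<epsilon>\<close> contributes at most \<open>max c 0 * \<epsilon>\<close>.
  For \<open>0 < a < 1\<close>, moving the consumption into the riskless asset gives a zero-consumption
  strategy whose terminal fund \<open>X\<close> satisfies \<open>\<integral>\<^sub>J \<gamma> \<le> exp (\<bar>r\<bar> T) X\<close> for every window
  \<open>J \<subseteq> [0,T]\<close>. Splitting \<open>\<gamma>\<close> at the pathwise level \<open>y = max (s / \<epsilon>) 1\<close>, where \<open>s\<close> bounds
  \<open>\<integral>\<^sub>J \<gamma>\<close>, gives \<open>\<integral>\<^sub>J \<gamma> powr a \<le> 2 \<epsilon> powr (1 - a) s powr a + 2 \<epsilon>\<close> on a window of length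
  \<open>\<epsilon>\<close>; in expectation this is \<open>O(\<epsilon> powr (1 - a) E[X powr a] + \<epsilon>)\<close>, and \<open>E[X powr a] < \<infinity>\<close> is
  the finite-utility condition.\<close>

lemma eint_le_nn_integral: "eint N f \<le> enn2ereal (\<integral>\<^sup>+ x. e2ennreal (f x) \<partial>N)"
proof -
  have "x - y \<le> x" if "0 \<le> y" for x y :: ereal
    using that by (cases x; cases y) auto
  then show ?thesis unfolding eint_def by simp
qed

lemma e2ennreal_eint_le: "e2ennreal (eint N f) \<le> (\<integral>\<^sup>+ x. e2ennreal (f x) \<partial>N)"
  using e2ennreal_mono[OF eint_le_nn_integral] by (simp add: e2ennreal_enn2ereal)

lemma eint_eint_le_nn_integral:
  "eint M (\<lambda>\<omega>. eint N (f \<omega>)) \<le> enn2ereal (\<integral>\<^sup>+ \<omega>. (\<integral>\<^sup>+ x. e2ennreal (f \<omega> x) \<partial>N) \<partial>M)"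
proof -
  have "(\<integral>\<^sup>+ \<omega>. e2ennreal (eint N (f \<omega>)) \<partial>M) \<le> (\<integral>\<^sup>+ \<omega>. (\<integral>\<^sup>+ x. e2ennreal (f \<omega> x) \<partial>N) \<partial>M)"
    by (intro nn_integral_mono e2ennreal_eint_le)
  then show ?thesis
    using eint_le_nn_integral order_trans by (fastforce simp: less_eq_ennreal.rep_eq)
qed

lemma powr_le_add_mult_powr:
  fixes x y a :: real
  assumes "0 \<le> x" "0 < y" "0 < a" "a < 1"
  shows "x powr a \<le> y powr a + y powr (a - 1) * x"
proof (cases "x \<le> y")
  case True
  then have "x powr a \<le> y powr a" using assms by (intro powr_mono2) auto
  then show ?thesis using assms by (simp add: add_increasing2)
next
  case False
  then have "x powr (a - 1) * x \<le> y powr (a - 1) * x"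
    using assms by (intro mult_right_mono powr_mono2') auto
  moreover have "x powr (a - 1) * x = x powr a"
    using False assms by (simp add: powr_diff)
  ultimately show ?thesis by (simp add: add_increasing)
qed

lemma powr_max_ratio_bound:
  fixes s e a :: real
  assumes "0 \<le> s" "0 < e" "0 < a" "a < 1"
  defines "y \<equiv> max (s / e) 1"
  shows "y powr a * e + y powr (a - 1) * s \<le> 2 * e powr (1 - a) * s powr a + 2 * e"
proof -
  have y_pos: "0 < y" unfolding y_def by simp
  have "y powr (a - 1) * s \<le> y powr (a - 1) * (y * e)"
    using assms by (intro mult_left_mono) (auto simp: y_def field_simps max_def)
  also have "\<dots> = y powr a * e" using y_pos by (simp add: powr_diff)
  finally have "y powr a * e + y powr (a - 1) * s \<le> 2 * (y powr a * e)" by linarith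
  also have "\<dots> \<le> 2 * (((s / e) powr a + 1) * e)"
    using assms by (intro mult_left_mono mult_right_mono) (auto simp: y_def max_def)
  also have "\<dots> = 2 * e powr (1 - a) * s powr a + 2 * e"
    using assms by (simp add: powr_divide powr_diff field_simps)
  finally show ?thesis .
qed

lemma nn_integral_powr_le:
  fixes g :: "'x \<Rightarrow> real"
  assumes "0 < a" "a < 1" "0 < e" "emeasure N (space N) \<le> ennreal e"
    and "g \<in> borel_measurable N" "\<And>x. 0 \<le> g x"
    and "(\<integral>\<^sup>+ x. ennreal (g x) \<partial>N) \<le> ennreal s" "0 \<le> s"
  shows "(\<integral>\<^sup>+ x. ennreal (g x powr a) \<partial>N) \<le> ennreal (2 * e powr (1 - a) * s powr a + 2 * e)"
proof -
  define y where "y = max (s / e) 1"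
  have y_pos: "0 < y" unfolding y_def by simp
  have "(\<integral>\<^sup>+ x. ennreal (g x powr a) \<partial>N)
      \<le> (\<integral>\<^sup>+ x. ennreal (y powr a) + ennreal (y powr (a - 1)) * ennreal (g x) \<partial>N)"
  proof (rule nn_integral_mono)
    fix x
    have "ennreal (g x powr a) \<le> ennreal (y powr a + y powr (a - 1) * g x)"
      using assms by (intro ennreal_leI powr_le_add_mult_powr y_pos) auto
    also have "\<dots> = ennreal (y powr a) + ennreal (y powr (a - 1)) * ennreal (g x)"
      using assms(6) by (simp add: ennreal_plus ennreal_mult)
    finally show "ennreal (g x powr a) \<le> \<dots>" .
  qed
  also have "\<dots> = ennreal (y powr a) * emeasure N (space N)
      + ennreal (y powr (a - 1)) * (\<integral>\<^sup>+ x. ennreal (g x) \<partial>N)"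
    using assms(5) by (simp add: nn_integral_add nn_integral_cmult)
  also have "\<dots> \<le> ennreal (y powr a) * ennreal e + ennreal (y powr (a - 1)) * ennreal s"
    using assms(4,7) by (intro add_mono mult_left_mono) auto
  also have "\<dots> = ennreal (y powr a * e + y powr (a - 1) * s)"
    using assms(3,8) by (simp add: ennreal_plus ennreal_mult)
  also have "\<dots> \<le> ennreal (2 * e powr (1 - a) * s powr a + 2 * e)"
    unfolding y_def using assms by (intro ennreal_leI powr_max_ratio_bound) auto
  finally show ?thesis .
qed

lemma e2ennreal_crra_le_powr:
  assumes "0 < a" "a < 1"
  shows "e2ennreal (crra a c x) \<le> ennreal (x powr a) + ennreal (max c 0)"
proof -
  have "e2ennreal (crra a c x) = ennreal (x powr a + c)"
    using assms by (simp add: crra_def)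
  also have "\<dots> \<le> ennreal (x powr a + max c 0)"
    by (intro ennreal_leI) simp
  also have "\<dots> = ennreal (x powr a) + ennreal (max c 0)"
    by (simp add: ennreal_plus)
  finally show ?thesis .
qed

lemma e2ennreal_crra_le_const:
  assumes "a < 0"
  shows "e2ennreal (crra a c x) \<le> ennreal (max c 0)"
  using assms by (auto simp: crra_def e2ennreal_neg intro: ennreal_leI)

lemma nn_integral_crra_le_powr:
  fixes g :: "'x \<Rightarrow> real"
  assumes "0 < a" "a < 1" "0 < e" "emeasure N (space N) \<le> ennreal e"
    and "g \<in> borel_measurable N" "\<And>x. 0 \<le> g x"
    and "(\<integral>\<^sup>+ x. ennreal (g x) \<partial>N) \<le> ennreal s" "0 \<le> s"
  shows "(\<integral>\<^sup>+ x. e2ennreal (crra a c (g x)) \<partial>N)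
           \<le> ennreal (2 * e powr (1 - a) * s powr a + 2 * e + max c 0 * e)"
proof -
  have "(\<integral>\<^sup>+ x. e2ennreal (crra a c (g x)) \<partial>N)
      \<le> (\<integral>\<^sup>+ x. ennreal (g x powr a) + ennreal (max c 0) \<partial>N)"
    using assms(1,2) by (intro nn_integral_mono e2ennreal_crra_le_powr)
  also have "\<dots> = (\<integral>\<^sup>+ x. ennreal (g x powr a) \<partial>N) + ennreal (max c 0) * emeasure N (space N)"
    using assms(5) by (simp add: nn_integral_add)
  also have "\<dots> \<le> ennreal (2 * e powr (1 - a) * s powr a + 2 * e) + ennreal (max c 0) * ennreal e"
    using nn_integral_powr_le[OF assms] assms(4) by (intro add_mono mult_left_mono) auto
  also have "\<dots> = ennreal (2 * e powr (1 - a) * s powr a + 2 * e + max c 0 * e)"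
    using assms(3,8) by (simp add: ennreal_plus ennreal_mult)
  finally show ?thesis .
qed

lemma nn_integral_crra_le_const:
  assumes "a < 0" "0 \<le> e" "emeasure N (space N) \<le> ennreal e"
  shows "(\<integral>\<^sup>+ x. e2ennreal (crra a c (g x)) \<partial>N) \<le> ennreal (max c 0 * e)"
proof -
  have "(\<integral>\<^sup>+ x. e2ennreal (crra a c (g x)) \<partial>N) \<le> (\<integral>\<^sup>+ x. ennreal (max c 0) \<partial>N)"
    using assms(1) by (intro nn_integral_mono e2ennreal_crra_le_const)
  also have "\<dots> \<le> ennreal (max c 0) * ennreal e"
    using assms(3) by (simp add: mult_left_mono)
  also have "\<dots> = ennreal (max c 0 * e)"
    using assms(2) by (simp add: ennreal_mult)
  finally show ?thesis .
qed

lemma nn_integral_le_discounted: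
  fixes g :: "real \<Rightarrow> real"
  assumes "J \<subseteq> {0..T}" "g \<in> borel_measurable lborel" "\<And>t. 0 \<le> g t"
  shows "(\<integral>\<^sup>+ t \<in> J. ennreal (g t) \<partial>lborel)
           \<le> ennreal (exp (\<bar>r\<bar> * T)) * (\<integral>\<^sup>+ t \<in> {0..T}. ennreal (exp (r * (T - t)) * g t) \<partial>lborel)"
proof -
  have "ennreal (g t) * indicator J t
      \<le> ennreal (exp (\<bar>r\<bar> * T)) * (ennreal (exp (r * (T - t)) * g t) * indicator {0..T} t)" for t
  proof (cases "t \<in> J")
    case True
    with assms(1) have t: "0 \<le> t" "t \<le> T" by auto
    have "- (r * (T - t)) \<le> \<bar>r\<bar> * (T - t)"
      using mult_right_mono[OF abs_ge_minus_self[of r], of "T - t"] t by simp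
    also have "\<dots> \<le> \<bar>r\<bar> * T"
      using t by (simp add: mult_left_mono)
    finally have "- (r * (T - t)) \<le> \<bar>r\<bar> * T" .
    then have "1 \<le> exp (\<bar>r\<bar> * T) * exp (r * (T - t))"
      by (simp add: exp_add[symmetric])
    then have "g t \<le> exp (\<bar>r\<bar> * T) * (exp (r * (T - t)) * g t)"
      using assms(3)[of t] by (simp add: mult_le_cancel_right1 mult.assoc[symmetric])
    then show ?thesis
      using True t assms(3)[of t] by (simp add: ennreal_mult[symmetric])
  qed simp
  then show ?thesis
    using assms(2) by (simp add: nn_integral_mono nn_integral_cmult[symmetric])
qed

lemma nn_integral_powr_finite_if_eint_crra_finite:
  fixes X :: "'w \<Rightarrow> real"
  assumes "prob_space M" "0 < a" "a < 1" "X \<in> borel_measurable M"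
    and "eint M (\<lambda>\<omega>. crra a c (X \<omega>)) < \<infinity>"
  shows "(\<integral>\<^sup>+ \<omega>. ennreal (X \<omega> powr a) \<partial>M) < \<infinity>"
proof -
  interpret prob_space M by fact
  have crra_pos: "e2ennreal (crra a c x) = ennreal (x powr a + c)"
    and crra_neg: "e2ennreal (- crra a c x) = ennreal (- (x powr a + c))" for x
    using assms(2,3) by (simp_all add: crra_def)
  have "(\<integral>\<^sup>+ \<omega>. ennreal (- (X \<omega> powr a + c)) \<partial>M) \<le> (\<integral>\<^sup>+ \<omega>. ennreal \<bar>c\<bar> \<partial>M)"
    by (intro nn_integral_mono ennreal_leI) (smt (verit) powr_ge_zero)
  also have "\<dots> < \<infinity>"
    by (simp add: emeasure_space_1)
  finally have neg_finite: "enn2ereal (\<integral>\<^sup>+ \<omega>. ennreal (- (X \<omega> powr a + c)) \<partial>M) \<noteq> \<infinity>"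
    by (simp add: less_top)
  have eint_eq: "eint M (\<lambda>\<omega>. crra a c (X \<omega>)) = enn2ereal (\<integral>\<^sup>+ \<omega>. ennreal (X \<omega> powr a + c) \<partial>M)
      - enn2ereal (\<integral>\<^sup>+ \<omega>. ennreal (- (X \<omega> powr a + c)) \<partial>M)"
    by (simp only: eint_def crra_pos crra_neg)
  have pos_finite: "(\<integral>\<^sup>+ \<omega>. ennreal (X \<omega> powr a + c) \<partial>M) < \<infinity>"
  proof (rule ccontr)
    assume "\<not> ?thesis"
    then have "(\<integral>\<^sup>+ \<omega>. ennreal (X \<omega> powr a + c) \<partial>M) = \<top>"
      by (simp add: less_top[symmetric])
    then have "eint M (\<lambda>\<omega>. crra a c (X \<omega>)) = \<infinity>"
      using neg_finite by (simp add: eint_eq)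
    then show False
      using assms(5) by simp
  qed
  have "(\<integral>\<^sup>+ \<omega>. ennreal (X \<omega> powr a) \<partial>M)
      \<le> (\<integral>\<^sup>+ \<omega>. ennreal (X \<omega> powr a + c) + ennreal \<bar>c\<bar> \<partial>M)"
  proof (rule nn_integral_mono)
    fix \<omega>
    have "ennreal (X \<omega> powr a) \<le> ennreal (max 0 (X \<omega> powr a + c) + \<bar>c\<bar>)"
      by (intro ennreal_leI) linarith
    then show "ennreal (X \<omega> powr a) \<le> ennreal (X \<omega> powr a + c) + ennreal \<bar>c\<bar>"
      by (simp add: ennreal_plus ennreal_max_0)
  qed
  also have "\<dots> = (\<integral>\<^sup>+ \<omega>. ennreal (X \<omega> powr a + c) \<partial>M) + ennreal \<bar>c\<bar>"
    using assms(4) by (simp add: nn_integral_add emeasure_space_1)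
  also have "\<dots> < \<infinity>"
    using pos_finite by (simp add: less_top[symmetric])
  finally show ?thesis .
qed

lemma market_admissible_consumption:
  assumes "market M T r Adm F" "(\<gamma>, \<alpha>) \<in> Adm" "\<omega> \<in> space M"
  shows "(\<lambda>t. \<gamma> t \<omega>) \<in> borel_measurable lborel" and "0 \<le> \<gamma> t \<omega>"
proof -
  from assms(1,2) have "(\<lambda>(t, \<omega>). \<gamma> t \<omega>) \<in> borel_measurable (lborel \<Otimes>\<^sub>M M)"
    and "\<forall>t. \<forall>\<omega> \<in> space M. 0 \<le> \<gamma> t \<omega>"
    unfolding market_def by fast+
  with assms(3) show "(\<lambda>t. \<gamma> t \<omega>) \<in> borel_measurable lborel" "0 \<le> \<gamma> t \<omega>"
    using measurable_compose[OF measurable_Pair2'[OF assms(3)]] by auto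
qed

lemma market_consumption_le_fund:
  assumes "market M T r Adm F" "(\<gamma>, \<alpha>) \<in> Adm"
  obtains \<alpha>' where "((\<lambda>_ _. 0), \<alpha>') \<in> Adm"
    and "AE \<omega> in M. \<forall>J \<subseteq> {0..T}. (\<integral>\<^sup>+ t \<in> J. ennreal (\<gamma> t \<omega>) \<partial>lborel)
           \<le> ennreal (exp (\<bar>r\<bar> * T)) * ennreal (F (\<lambda>_ _. 0) \<alpha>' T \<omega>)"
proof -
  from assms obtain \<alpha>' where \<alpha>': "((\<lambda>_ _. 0), \<alpha>') \<in> Adm"
    and reinvest: "AE \<omega> in M. ennreal (F (\<lambda>_ _. 0) \<alpha>' T \<omega>) = ennreal (F \<gamma> \<alpha> T \<omega>)
          + (\<integral>\<^sup>+ t \<in> {0..T}. ennreal (exp (r * (T - t)) * \<gamma> t \<omega>) \<partial>lborel)"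
    unfolding market_def by fast
  have "AE \<omega> in M. \<forall>J \<subseteq> {0..T}. (\<integral>\<^sup>+ t \<in> J. ennreal (\<gamma> t \<omega>) \<partial>lborel)
           \<le> ennreal (exp (\<bar>r\<bar> * T)) * ennreal (F (\<lambda>_ _. 0) \<alpha>' T \<omega>)"
    using reinvest AE_space
  proof eventually_elim
    case (elim \<omega>)
    have "(\<integral>\<^sup>+ t \<in> {0..T}. ennreal (exp (r * (T - t)) * \<gamma> t \<omega>) \<partial>lborel)
        \<le> ennreal (F (\<lambda>_ _. 0) \<alpha>' T \<omega>)"
      by (simp add: elim(1))
    then show ?case
      using nn_integral_le_discounted market_admissible_consumption[OF assms elim(2)]
      by (meson mult_left_mono order_trans zero_le)
  qed
  with \<alpha>' show thesis by (rule that)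
qed

lemma expected_consumption_utility_le_powr:
  assumes "prob_space M" "market M T r Adm F" "(\<gamma>, \<alpha>) \<in> Adm" "0 \<le> T"
    and "0 < a" "a < 1" "finite_utility M T Adm F (crra a c)"
  obtains A C where "\<And>J e. 0 < e \<Longrightarrow> J \<in> sets lborel \<Longrightarrow> J \<subseteq> {0..T} \<Longrightarrow>
      emeasure lborel J \<le> ennreal e \<Longrightarrow>
      (\<integral>\<^sup>+ \<omega>. (\<integral>\<^sup>+ t. e2ennreal (crra a c (\<gamma> t \<omega>)) \<partial>restrict_space lborel J) \<partial>M)
        \<le> ennreal (A * e powr (1 - a) + C * e)"
proof -
  interpret prob_space M by fact
  obtain \<alpha>' where \<alpha>': "((\<lambda>_ _. 0), \<alpha>') \<in> Adm"
    and consumption_le: "AE \<omega> in M. \<forall>J \<subseteq> {0..T}. (\<integral>\<^sup>+ t \<in> J. ennreal (\<gamma> t \<omega>) \<partial>lborel)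
           \<le> ennreal (exp (\<bar>r\<bar> * T)) * ennreal (F (\<lambda>_ _. 0) \<alpha>' T \<omega>)"
    using market_consumption_le_fund[OF assms(2,3)] by blast
  define X where "X = F (\<lambda>_ _. 0) \<alpha>' T"
  define K where "K = exp (\<bar>r\<bar> * T)"
  have X_measurable: "X \<in> borel_measurable M" and X_nonneg: "\<And>\<omega>. \<omega> \<in> space M \<Longrightarrow> 0 \<le> X \<omega>"
    using assms(2,4) \<alpha>' unfolding market_def X_def by auto
  have "eint M (\<lambda>\<omega>. crra a c (X \<omega>))
      \<le> (SUP \<alpha> \<in> {\<alpha>. ((\<lambda>_ _. 0), \<alpha>) \<in> Adm}. eint M (\<lambda>\<omega>. crra a c (F (\<lambda>_ _. 0) \<alpha> T \<omega>)))"
    unfolding X_def using \<alpha>' by (intro SUP_upper) auto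
  also have "\<dots> < \<infinity>"
    using assms(7) unfolding finite_utility_def .
  finally have "(\<integral>\<^sup>+ \<omega>. ennreal (X \<omega> powr a) \<partial>M) < \<infinity>"
    by (intro nn_integral_powr_finite_if_eint_crra_finite[OF assms(1,5,6) X_measurable])
  then obtain I where I: "(\<integral>\<^sup>+ \<omega>. ennreal (X \<omega> powr a) \<partial>M) = ennreal I" "0 \<le> I"
    by (auto simp: less_top_ennreal)
  show thesis
  proof (rule that[of "2 * K powr a * I" "2 + max c 0"])
    fix J e
    assume e: "0 < e" and J: "J \<in> sets lborel" "J \<subseteq> {0..T}" "emeasure lborel J \<le> ennreal e"
    have "AE \<omega> in M. (\<integral>\<^sup>+ t. e2ennreal (crra a c (\<gamma> t \<omega>)) \<partial>restrict_space lborel J)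
        \<le> ennreal (2 * K powr a * e powr (1 - a)) * ennreal (X \<omega> powr a) + ennreal ((2 + max c 0) * e)"
      using consumption_le AE_space
    proof eventually_elim
      case (elim \<omega>)
      have "(\<integral>\<^sup>+ t. ennreal (\<gamma> t \<omega>) \<partial>restrict_space lborel J) \<le> ennreal (K * X \<omega>)"
        using elim J X_nonneg by (simp add: nn_integral_restrict_space K_def X_def ennreal_mult)
      then have "(\<integral>\<^sup>+ t. e2ennreal (crra a c (\<gamma> t \<omega>)) \<partial>restrict_space lborel J)
          \<le> ennreal (2 * e powr (1 - a) * (K * X \<omega>) powr a + 2 * e + max c 0 * e)"
        using assms(5,6) e J elim(2) X_nonneg
        by (intro nn_integral_crra_le_powr)
          (auto simp: emeasure_restrict_space K_def intro: measurable_restrict_space1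
            market_admissible_consumption[OF assms(2,3)])
      also have "\<dots> = ennreal (2 * K powr a * e powr (1 - a)) * ennreal (X \<omega> powr a)
          + ennreal ((2 + max c 0) * e)"
        using e X_nonneg[OF elim(2)]
        by (simp add: K_def powr_mult ennreal_mult[symmetric] ennreal_plus[symmetric] algebra_simps
            del: ennreal_plus)
      finally show ?case .
    qed
    then have "(\<integral>\<^sup>+ \<omega>. (\<integral>\<^sup>+ t. e2ennreal (crra a c (\<gamma> t \<omega>)) \<partial>restrict_space lborel J) \<partial>M)
        \<le> (\<integral>\<^sup>+ \<omega>. ennreal (2 * K powr a * e powr (1 - a)) * ennreal (X \<omega> powr a)
              + ennreal ((2 + max c 0) * e) \<partial>M)"
      by (rule nn_integral_mono_AE)
    also have "\<dots> = ennreal (2 * K powr a * e powr (1 - a)) * ennreal I + ennreal ((2 + max c 0) * e)"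
      using X_measurable I by (simp add: nn_integral_add nn_integral_cmult emeasure_space_1)
    also have "\<dots> = ennreal (2 * K powr a * I * e powr (1 - a) + (2 + max c 0) * e)"
      using e I by (simp add: K_def ennreal_mult[symmetric] ennreal_plus[symmetric] mult_ac
          del: ennreal_plus)
    finally show "(\<integral>\<^sup>+ \<omega>. (\<integral>\<^sup>+ t. e2ennreal (crra a c (\<gamma> t \<omega>)) \<partial>restrict_space lborel J) \<partial>M)
        \<le> ennreal (2 * K powr a * I * e powr (1 - a) + (2 + max c 0) * e)" .
  qed
qed

lemma expected_consumption_utility_le:
  assumes "prob_space M" "market M T r Adm F" "(\<gamma>, \<alpha>) \<in> Adm" "0 \<le> T"
    and "(0 < a \<and> a < 1) \<or> a < 0" "finite_utility M T Adm F (crra a c)"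
  obtains A C where "\<And>J e. 0 < e \<Longrightarrow> J \<in> sets lborel \<Longrightarrow> J \<subseteq> {0..T} \<Longrightarrow>
      emeasure lborel J \<le> ennreal e \<Longrightarrow>
      (\<integral>\<^sup>+ \<omega>. (\<integral>\<^sup>+ t. e2ennreal (crra a c (\<gamma> t \<omega>)) \<partial>restrict_space lborel J) \<partial>M)
        \<le> ennreal (A * e powr (1 - a) + C * e)"
proof (cases "a < 0")
  case True
  interpret prob_space M by fact
  show thesis
  proof (rule that[of 0 "max c 0"])
    fix J :: "real set" and e :: real
    assume "0 < e" "J \<in> sets lborel" "emeasure lborel J \<le> ennreal e"
    then have "(\<integral>\<^sup>+ \<omega>. (\<integral>\<^sup>+ t. e2ennreal (crra a c (\<gamma> t \<omega>)) \<partial>restrict_space lborel J) \<partial>M)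
        \<le> (\<integral>\<^sup>+ \<omega>. ennreal (max c 0 * e) \<partial>M)"
      using True by (intro nn_integral_mono nn_integral_crra_le_const) (auto simp: emeasure_restrict_space)
    then show "(\<integral>\<^sup>+ \<omega>. (\<integral>\<^sup>+ t. e2ennreal (crra a c (\<gamma> t \<omega>)) \<partial>restrict_space lborel J) \<partial>M)
        \<le> ennreal (0 * e powr (1 - a) + max c 0 * e)"
      by (simp add: emeasure_space_1)
  qed
next
  case False
  with assms(5) have a: "0 < a" "a < 1" by auto
  show thesis
    using that by (rule expected_consumption_utility_le_powr[OF assms(1-4) a assms(6)])
qed

lemma tendsto_powr_plus_linear_at_right_0:
  fixes A C p :: real
  assumes "0 < p"
  shows "((\<lambda>e. A * e powr p + C * e) \<longlongrightarrow> 0) (at_right 0)"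
proof -
  have "((\<lambda>e. e powr p) \<longlongrightarrow> 0) (at_right 0)"
    using assms by (intro tendsto_zero_powrI tendsto_ident_at tendsto_const)
      (auto simp: eventually_at_right_field intro: exI[of _ 1])
  then have "((\<lambda>e. A * e powr p + C * e) \<longlongrightarrow> A * 0 + C * 0) (at_right 0)"
    by (intro tendsto_intros)
  then show ?thesis by simp
qed

lemma Limsup_eint_eint_le_zero:
  fixes f :: "real \<Rightarrow> 'w \<Rightarrow> 'x \<Rightarrow> ereal" and N :: "real \<Rightarrow> 'x measure" and B :: "real \<Rightarrow> real"
  assumes "\<forall>\<^sub>F e in at_right 0. (\<integral>\<^sup>+ \<omega>. (\<integral>\<^sup>+ x. e2ennreal (f e \<omega> x) \<partial>N e) \<partial>M) \<le> ennreal (B e)"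
    and "(B \<longlongrightarrow> 0) (at_right 0)"
  shows "Limsup (at_right 0) (\<lambda>e. eint M (\<lambda>\<omega>. eint (N e) (f e \<omega>))) \<le> 0"
proof -
  have "\<forall>\<^sub>F e in at_right 0. eint M (\<lambda>\<omega>. eint (N e) (f e \<omega>)) \<le> ereal (max 0 (B e))"
    using assms(1)
  proof eventually_elim
    case (elim e)
    have "eint M (\<lambda>\<omega>. eint (N e) (f e \<omega>))
        \<le> enn2ereal (\<integral>\<^sup>+ \<omega>. (\<integral>\<^sup>+ x. e2ennreal (f e \<omega> x) \<partial>N e) \<partial>M)"
      by (rule eint_eint_le_nn_integral)
    also have "\<dots> \<le> enn2ereal (ennreal (B e))"
      using elim by (simp add: less_eq_ennreal.rep_eq[symmetric])
    also have "\<dots> = ereal (max 0 (B e))"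
      by (metis ennreal_max_0 enn2ereal_ennreal max.cobounded1)
    finally show ?case .
  qed
  then have "Limsup (at_right 0) (\<lambda>e. eint M (\<lambda>\<omega>. eint (N e) (f e \<omega>)))
      \<le> Limsup (at_right 0) (\<lambda>e. ereal (max 0 (B e)))"
    by (rule Limsup_mono)
  also have "\<dots> = ereal (max 0 0)"
    by (intro lim_imp_Limsup trivial_limit_at_right_real tendsto_intros assms(2))
  finally show ?thesis by (simp add: zero_ereal_def)
qed

theorem mainTheorem12:
  fixes M :: "'w measure" and \<tau> :: "'w \<Rightarrow> real" and T r a c :: real
    and Adm :: "((real \<Rightarrow> 'w \<Rightarrow> real) \<times> 'a) set"
    and F :: "(real \<Rightarrow> 'w \<Rightarrow> real) \<Rightarrow> 'a \<Rightarrow> real \<Rightarrow> 'w \<Rightarrow> real"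
    and \<gamma> :: "real \<Rightarrow> 'w \<Rightarrow> real" and \<alpha> :: 'a
  assumes "prob_space M"
    and "market M T r Adm F"
    and "(0 < a \<and> a < 1) \<or> a < 0"
    and "finite_utility M T Adm F (crra a c)"
    and "\<tau> \<in> borel_measurable M" and "\<forall>\<omega> \<in> space M. 0 \<le> \<tau> \<omega>"
    and "longevity_set M T \<tau> \<noteq> {}"
    and "(\<gamma>, \<alpha>) \<in> Adm"
  shows "Limsup (at_right 0)
           (\<lambda>\<epsilon>. eint M (\<lambda>\<omega>. eint (restrict_space lborel
                     ({longevity_bound M T \<tau> - \<epsilon> .. longevity_bound M T \<tau>} \<inter> {0..T}))
                   (\<lambda>t. crra a c (\<gamma> t \<omega>)))) \<le> 0"
proof -
  define L where "L = longevity_bound M T \<tau>"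
  define J where "J e = {L - e .. L} \<inter> {0..T}" for e
  have T: "0 \<le> T"
    using assms(7) unfolding longevity_set_def by auto
  obtain A C where bound: "\<And>J e. 0 < e \<Longrightarrow> J \<in> sets lborel \<Longrightarrow> J \<subseteq> {0..T} \<Longrightarrow>
      emeasure lborel J \<le> ennreal e \<Longrightarrow>
      (\<integral>\<^sup>+ \<omega>. (\<integral>\<^sup>+ t. e2ennreal (crra a c (\<gamma> t \<omega>)) \<partial>restrict_space lborel J) \<partial>M)
        \<le> ennreal (A * e powr (1 - a) + C * e)"
    using expected_consumption_utility_le[OF assms(1,2,8) T assms(3,4)] by metis
  have "emeasure lborel (J e) \<le> ennreal e" if "0 < e" for e
    using that emeasure_mono[of "J e" "{L - e .. L}" lborel] by (simp add: J_def)
  then have "\<forall>\<^sub>F e in at_right 0.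
      (\<integral>\<^sup>+ \<omega>. (\<integral>\<^sup>+ t. e2ennreal (crra a c (\<gamma> t \<omega>)) \<partial>restrict_space lborel (J e)) \<partial>M)
        \<le> ennreal (A * e powr (1 - a) + C * e)"
    unfolding eventually_at_right_field by (intro exI[of _ 1]) (auto intro: bound simp: J_def)
  moreover have "((\<lambda>e. A * e powr (1 - a) + C * e) \<longlongrightarrow> 0) (at_right 0)"
    using assms(3) by (intro tendsto_powr_plus_linear_at_right_0) auto
  ultimately show ?thesis
    unfolding L_def[symmetric] J_def[symmetric] by (rule Limsup_eint_eint_le_zero)
qed

end
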